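(* Let $\mathrm{Var}$ be a variety of algebras with one binary multiplication defined by multilinear identities. If a multilinear polynomial $f$ in the operations $\prec,\succ$ is an identity of all algebras over the operad $\mathrm{Var}\circ\mathrm{Nov}$ (under the identification described below), then $f$ is a derived identity of $\mathrm{Var}$.
   Context: For an algebra $A$ with derivation $d$, $A^{(d)}=(A,\prec,\succ)$ with $x\prec y=x\,d(y)$, $x\succ y=d(x)\,y$; $f$ is a derived identity of $\mathrm{Var}$ if $f=0$ on $A^{(d)}$ for all $A\in\mathrm{Var}$ and all derivations $d$ of $A$. The operad $\mathrm{Var}$ has components $\mathrm{Var}(n)$ = multilinear elements of degree $n$ in the free $\mathrm{Var}$-algebra on $x_1,x_2,\dots$. $\mathrm{Nov}$ is the operad of Novikov algebras: one operation $\circ$ with $(a\circ b)\circ c-a\circ(b\circ c)=(b\circ a)\circ c-b\circ(a\circ c)$ and $(a\circ b)\circ c=(a\circ c)\circ b$. The Hadamard product $\mathcal P\otimes\mathcal Q$ has components $\mathcal P(n)\otimes\mathcal Q(n)$ with componentwise composition; the Manin white product $\mathcal P\circ\mathcal Q$ is the suboperad generated by $\mathcal P(2)\otimes\mathcal Q(2)$. The operations of $\mathrm{Var}\circ\mathrm{Nov}$ are identified as $x_1\prec x_2=x_1x_2\otimes(x_1\circ x_2)$, $x_1\succ x_2=x_1x_2\otimes(x_2\circ x_1)$. *)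

theory Defs
  imports Main "HOL-Library.Function_Algebras"
begin

text \<open>Monomials (binary trees) in the variables x_0, x_1, ... for ONE binary operation.
  Used both for the operation of Var (ordinary product) and of Nov (the Novikov product).\<close>
datatype mon = V nat | M mon mon

fun leaves :: "mon \<Rightarrow> nat list" where
  "leaves (V i) = [i]"
| "leaves (M s t) = leaves s @ leaves t"

definition fsupp :: "('m \<Rightarrow> 'k::zero) \<Rightarrow> bool" where
  "fsupp p \<longleftrightarrow> finite {m. p m \<noteq> 0}"

definition mono :: "'m \<Rightarrow> ('m \<Rightarrow> 'k::{zero,one})" where
  "mono m = (\<lambda>x. if x = m then 1 else 0)"

definition pmul :: "(mon \<Rightarrow> 'k::comm_ring_1) \<Rightarrow> (mon \<Rightarrow> 'k) \<Rightarrow> (mon \<Rightarrow> 'k)" where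
  "pmul p q = (\<lambda>m. case m of V _ \<Rightarrow> 0 | M s t \<Rightarrow> p s * q t)"

fun evmon :: "(nat \<Rightarrow> (mon \<Rightarrow> 'k::comm_ring_1)) \<Rightarrow> mon \<Rightarrow> (mon \<Rightarrow> 'k)" where
  "evmon \<sigma> (V i) = \<sigma> i"
| "evmon \<sigma> (M s t) = pmul (evmon \<sigma> s) (evmon \<sigma> t)"

definition psubst :: "(nat \<Rightarrow> (mon \<Rightarrow> 'k::comm_ring_1)) \<Rightarrow> (mon \<Rightarrow> 'k) \<Rightarrow> (mon \<Rightarrow> 'k)" where
  "psubst \<sigma> p = (\<lambda>m. \<Sum>t\<in>{t. p t \<noteq> 0}. p t * evmon \<sigma> t m)"

inductive_set tideal :: "(mon \<Rightarrow> 'k::comm_ring_1) set \<Rightarrow> (mon \<Rightarrow> 'k) set" for S where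
  gen: "g \<in> S \<Longrightarrow> (\<forall>i. fsupp (\<sigma> i)) \<Longrightarrow> psubst \<sigma> g \<in> tideal S"
| zero: "0 \<in> tideal S"
| add: "p \<in> tideal S \<Longrightarrow> q \<in> tideal S \<Longrightarrow> p + q \<in> tideal S"
| smult: "p \<in> tideal S \<Longrightarrow> (\<lambda>m. c * p m) \<in> tideal S"
| mulr: "p \<in> tideal S \<Longrightarrow> fsupp q \<Longrightarrow> pmul p q \<in> tideal S"
| mull: "p \<in> tideal S \<Longrightarrow> fsupp q \<Longrightarrow> pmul q p \<in> tideal S"

definition ml_mon :: "nat \<Rightarrow> mon \<Rightarrow> bool" where
  "ml_mon n m \<longleftrightarrow> distinct (leaves m) \<and> set (leaves m) = {1..n}"

definition ml_pol :: "nat \<Rightarrow> (mon \<Rightarrow> 'k::zero) \<Rightarrow> bool" where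
  "ml_pol n p \<longleftrightarrow> fsupp p \<and> (\<forall>m. p m \<noteq> 0 \<longrightarrow> ml_mon n m)"

definition multilinear_identity :: "(mon \<Rightarrow> 'k::zero) \<Rightarrow> bool" where
  "multilinear_identity p \<longleftrightarrow> fsupp p \<and>
     (\<exists>X. \<forall>m. p m \<noteq> 0 \<longrightarrow> distinct (leaves m) \<and> set (leaves m) = X)"

text \<open>Var(n): multilinear component of degree n of the free Var-algebra, i.e. the space of
  multilinear polynomials of degree n modulo its intersection with the T-ideal; we record the
  kernel of this quotient map.\<close>
definition var_kernel :: "(mon \<Rightarrow> 'k::comm_ring_1) set \<Rightarrow> nat \<Rightarrow> (mon \<Rightarrow> 'k) set" where
  "var_kernel S n = {p \<in> tideal S. ml_pol n p}"

definition nov_ids :: "(mon \<Rightarrow> 'k::comm_ring_1) set" where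
  "nov_ids =
    { mono (M (M (V 1) (V 2)) (V 3)) - mono (M (V 1) (M (V 2) (V 3)))
      - mono (M (M (V 2) (V 1)) (V 3)) + mono (M (V 2) (M (V 1) (V 3))),
      mono (M (M (V 1) (V 2)) (V 3)) - mono (M (M (V 1) (V 3)) (V 2)) }"

datatype dmon = DV nat | Prec dmon dmon | Succ dmon dmon

fun dleaves :: "dmon \<Rightarrow> nat list" where
  "dleaves (DV i) = [i]"
| "dleaves (Prec s t) = dleaves s @ dleaves t"
| "dleaves (Succ s t) = dleaves s @ dleaves t"

definition ml_dpol :: "nat \<Rightarrow> (dmon \<Rightarrow> 'k::zero) \<Rightarrow> bool" where
  "ml_dpol n f \<longleftrightarrow> fsupp f \<and>
     (\<forall>m. f m \<noteq> 0 \<longrightarrow> distinct (dleaves m) \<and> set (dleaves m) = {1..n})"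

text \<open>Identification x_1 prec x_2 = x_1x_2 (x) (x_1 o x_2),  x_1 succ x_2 = x_1x_2 (x) (x_2 o x_1),
  extended to all monomials by (componentwise) operadic composition.\<close>
fun phi :: "dmon \<Rightarrow> mon \<times> mon" where
  "phi (DV i) = (V i, V i)"
| "phi (Prec s t) = (M (fst (phi s)) (fst (phi t)), M (snd (phi s)) (snd (phi t)))"
| "phi (Succ s t) = (M (fst (phi s)) (fst (phi t)), M (snd (phi t)) (snd (phi s)))"

definition tens_image :: "(dmon \<Rightarrow> 'k::comm_ring_1) \<Rightarrow> (mon \<times> mon \<Rightarrow> 'k)" where
  "tens_image f = (\<lambda>x. \<Sum>m\<in>{m. f m \<noteq> 0 \<and> phi m = x}. f m)"

definition tens :: "(mon \<Rightarrow> 'k::times) \<Rightarrow> (mon \<Rightarrow> 'k) \<Rightarrow> (mon \<times> mon \<Rightarrow> 'k)" where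
  "tens p q = (\<lambda>(u, w). p u * q w)"

definition lin_span :: "('m \<Rightarrow> 'k::field) set \<Rightarrow> ('m \<Rightarrow> 'k) set" where
  "lin_span X = {(\<Sum>a\<in>t. (\<lambda>x. r a * a x)) | t r. finite t \<and> t \<subseteq> X}"

text \<open>Kernel of the map from (multilinear polys of degree n) (x) (multilinear polys of degree n)
  onto Var(n) (x) Nov(n):  I_n (x) Q_n + P_n (x) J_n.\<close>
definition hadamard_kernel :: "(mon \<Rightarrow> 'k::field) set \<Rightarrow> nat \<Rightarrow> (mon \<times> mon \<Rightarrow> 'k) set" where
  "hadamard_kernel S n = lin_span
     ({tens g (mono w) | g w. g \<in> var_kernel S n \<and> ml_mon n w}
      \<union> {tens (mono u) h | u h. ml_mon n u \<and> h \<in> var_kernel nov_ids n})"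

text \<open>f is an identity of all algebras over Var o Nov iff its image in
  (Var o Nov)(n), a subspace of Var(n) (x) Nov(n), is zero.\<close>
definition white_identity :: "(mon \<Rightarrow> 'k::field) set \<Rightarrow> nat \<Rightarrow> (dmon \<Rightarrow> 'k) \<Rightarrow> bool" where
  "white_identity S n f \<longleftrightarrow> tens_image f \<in> hadamard_kernel S n"

definition is_algebra :: "('k::field \<Rightarrow> 'a::ab_group_add \<Rightarrow> 'a) \<Rightarrow> ('a \<Rightarrow> 'a \<Rightarrow> 'a) \<Rightarrow> bool" where
  "is_algebra scale mul \<longleftrightarrow>
     (\<forall>a x y. scale a (x + y) = scale a x + scale a y) \<and>
     (\<forall>a b x. scale (a + b) x = scale a x + scale b x) \<and>
     (\<forall>a b x. scale a (scale b x) = scale (a * b) x) \<and>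
     (\<forall>x. scale 1 x = x) \<and>
     (\<forall>x y z. mul (x + y) z = mul x z + mul y z \<and> mul x (y + z) = mul x y + mul x z) \<and>
     (\<forall>c x y. mul (scale c x) y = scale c (mul x y) \<and> mul x (scale c y) = scale c (mul x y))"

fun eval_mon :: "('a \<Rightarrow> 'a \<Rightarrow> 'a) \<Rightarrow> (nat \<Rightarrow> 'a) \<Rightarrow> mon \<Rightarrow> 'a" where
  "eval_mon mul a (V i) = a i"
| "eval_mon mul a (M s t) = mul (eval_mon mul a s) (eval_mon mul a t)"

definition eval_pol :: "('k::zero \<Rightarrow> 'a::comm_monoid_add \<Rightarrow> 'a) \<Rightarrow> ('a \<Rightarrow> 'a \<Rightarrow> 'a) \<Rightarrow> (nat \<Rightarrow> 'a) \<Rightarrow> (mon \<Rightarrow> 'k) \<Rightarrow> 'a" where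
  "eval_pol scale mul a p = (\<Sum>m\<in>{m. p m \<noteq> 0}. scale (p m) (eval_mon mul a m))"

definition in_var :: "(mon \<Rightarrow> 'k::field) set \<Rightarrow> ('k \<Rightarrow> 'a::ab_group_add \<Rightarrow> 'a) \<Rightarrow> ('a \<Rightarrow> 'a \<Rightarrow> 'a) \<Rightarrow> bool" where
  "in_var S scale mul \<longleftrightarrow> is_algebra scale mul \<and> (\<forall>g\<in>S. \<forall>a. eval_pol scale mul a g = 0)"

definition is_derivation :: "('k::field \<Rightarrow> 'a::ab_group_add \<Rightarrow> 'a) \<Rightarrow> ('a \<Rightarrow> 'a \<Rightarrow> 'a) \<Rightarrow> ('a \<Rightarrow> 'a) \<Rightarrow> bool" where
  "is_derivation scale mul d \<longleftrightarrow>
     (\<forall>x y. d (x + y) = d x + d y) \<and> (\<forall>c x. d (scale c x) = scale c (d x)) \<and>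
     (\<forall>x y. d (mul x y) = mul (d x) y + mul x (d y))"

fun eval_dmon :: "('a \<Rightarrow> 'a \<Rightarrow> 'a) \<Rightarrow> ('a \<Rightarrow> 'a) \<Rightarrow> (nat \<Rightarrow> 'a) \<Rightarrow> dmon \<Rightarrow> 'a" where
  "eval_dmon mul d a (DV i) = a i"
| "eval_dmon mul d a (Prec s t) = mul (eval_dmon mul d a s) (d (eval_dmon mul d a t))"
| "eval_dmon mul d a (Succ s t) = mul (d (eval_dmon mul d a s)) (eval_dmon mul d a t)"

definition eval_dpol :: "('k::zero \<Rightarrow> 'a::comm_monoid_add \<Rightarrow> 'a) \<Rightarrow> ('a \<Rightarrow> 'a \<Rightarrow> 'a) \<Rightarrow> ('a \<Rightarrow> 'a) \<Rightarrow> (nat \<Rightarrow> 'a) \<Rightarrow> (dmon \<Rightarrow> 'k) \<Rightarrow> 'a" where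
  "eval_dpol scale mul d a f = (\<Sum>m\<in>{m. f m \<noteq> 0}. scale (f m) (eval_dmon mul d a m))"

end

theory Submission
  imports Defs
begin

text \<open>The free Novikov algebra embeds into a commutative associative algebra with a derivation
  D via x o y = x D(y); its multilinear part of degree n has the differential monomials
  x_1^(k_1) ... x_n^(k_n) as a basis. Given A in Var with derivation d and a_1, ..., a_n in A, pair
  a Var-monomial u with a Novikov monomial w by expanding w in this basis and sending the basis
  element x_1^(k_1) ... x_n^(k_n) to u evaluated at d^k_1 a_1, ..., d^k_n a_n. Since d acts on
  values of u by the Leibniz rule exactly as D acts on the basis, induction on a monomial in
  prec, succ shows that its image u (x) w in Var(n) (x) Nov(n) is paired to its value in A^(d).
  The pairing kills I_n (x) Nov(n), because identities of Var hold at every substitution, and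
  Var(n) (x) J_n, because Novikov identities hold in the differential algebra.\<close>

lemma sum_apply: "(\<Sum>i\<in>A. f i) x = (\<Sum>i\<in>A. f i x)"
  by (induction A rule: infinite_finite_induct) auto

lemma fsupp_zero [simp]: "fsupp (0::'m \<Rightarrow> 'k::zero)"
  by (simp add: fsupp_def)

lemma fsupp_add: "fsupp p \<Longrightarrow> fsupp q \<Longrightarrow> fsupp (p + q :: 'm \<Rightarrow> 'k::comm_ring_1)"
  unfolding fsupp_def by (rule finite_subset[of _ "{m. p m \<noteq> 0} \<union> {m. q m \<noteq> 0}"]) auto

lemma fsupp_diff: "fsupp p \<Longrightarrow> fsupp q \<Longrightarrow> fsupp (p - q :: 'm \<Rightarrow> 'k::comm_ring_1)"
  unfolding fsupp_def by (rule finite_subset[of _ "{m. p m \<noteq> 0} \<union> {m. q m \<noteq> 0}"]) auto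

lemma fsupp_smult: "fsupp p \<Longrightarrow> fsupp (\<lambda>m. c * p m :: 'k::comm_ring_1)"
  unfolding fsupp_def by (rule finite_subset[of _ "{m. p m \<noteq> 0}"]) auto

lemma fsupp_sum:
  "finite T \<Longrightarrow> (\<And>a. a \<in> T \<Longrightarrow> fsupp (g a :: 'm \<Rightarrow> 'k::comm_ring_1)) \<Longrightarrow> fsupp (\<Sum>a\<in>T. g a)"
  by (induction T rule: finite_induct) (auto simp: fsupp_add)

lemma fsupp_mono: "fsupp (mono m :: 'm \<Rightarrow> 'k::zero_neq_one)"
  by (simp add: fsupp_def mono_def)

lemma fsupp_tens_mono_right: "fsupp g \<Longrightarrow> fsupp (tens g (mono w) :: mon \<times> mon \<Rightarrow> 'k::comm_ring_1)"
  unfolding fsupp_def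
  by (rule finite_subset[of _ "{u. g u \<noteq> 0} \<times> {w}"]) (auto simp: tens_def mono_def split: if_splits)

lemma fsupp_tens_mono_left: "fsupp h \<Longrightarrow> fsupp (tens (mono u) h :: mon \<times> mon \<Rightarrow> 'k::comm_ring_1)"
  unfolding fsupp_def
  by (rule finite_subset[of _ "{u} \<times> {w. h w \<noteq> 0}"]) (auto simp: tens_def mono_def split: if_splits)

definition lin_ext :: "('k::zero \<Rightarrow> 'a::comm_monoid_add \<Rightarrow> 'a) \<Rightarrow> ('m \<Rightarrow> 'k) \<Rightarrow> ('m \<Rightarrow> 'a) \<Rightarrow> 'a" where
  "lin_ext sc p E = (\<Sum>m\<in>{m. p m \<noteq> 0}. sc (p m) (E m))"

lemma eval_pol_eq_lin_ext: "eval_pol scale mul a p = lin_ext scale p (eval_mon mul a)"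
  by (simp add: eval_pol_def lin_ext_def)

locale bilinear_algebra =
  fixes scale :: "'k::field \<Rightarrow> 'a::ab_group_add \<Rightarrow> 'a" and mul :: "'a \<Rightarrow> 'a \<Rightarrow> 'a"
  assumes algebra: "is_algebra scale mul"
begin

lemma scale_add_right: "scale c (x + y) = scale c x + scale c y"
  using algebra unfolding is_algebra_def by blast
lemma scale_add_left: "scale (b + c) x = scale b x + scale c x"
  using algebra unfolding is_algebra_def by blast
lemma scale_scale: "scale b (scale c x) = scale (b * c) x"
  using algebra unfolding is_algebra_def by blast
lemma scale_one [simp]: "scale 1 x = x"
  using algebra unfolding is_algebra_def by blast
lemma mul_add_left: "mul (x + y) z = mul x z + mul y z"
  using algebra unfolding is_algebra_def by blast
lemma mul_add_right: "mul x (y + z) = mul x y + mul x z"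
  using algebra unfolding is_algebra_def by blast
lemma mul_scale_left: "mul (scale c x) y = scale c (mul x y)"
  using algebra unfolding is_algebra_def by blast
lemma mul_scale_right: "mul x (scale c y) = scale c (mul x y)"
  using algebra unfolding is_algebra_def by blast

lemma scale_zero_right [simp]: "scale c 0 = 0"
  using scale_add_right[of c 0 0] by simp
lemma scale_zero_left [simp]: "scale 0 x = 0"
  using scale_add_left[of 0 0 x] by simp
lemma mul_zero_left [simp]: "mul 0 y = 0"
  using mul_add_left[of 0 0 y] by simp
lemma mul_zero_right [simp]: "mul x 0 = 0"
  using mul_add_right[of x 0 0] by simp
lemma scale_minus_one: "scale (-1) x = - x"
  using scale_add_left[of 1 "-1" x] by (simp add: eq_neg_iff_add_eq_0 add.commute)

lemma scale_sum_right: "scale c (\<Sum>i\<in>I. f i) = (\<Sum>i\<in>I. scale c (f i))"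
  by (induction I rule: infinite_finite_induct) (auto simp: scale_add_right)
lemma scale_sum_left: "scale (\<Sum>i\<in>I. f i) x = (\<Sum>i\<in>I. scale (f i) x)"
  by (induction I rule: infinite_finite_induct) (auto simp: scale_add_left)
lemma mul_sum_left: "mul (\<Sum>i\<in>I. f i) y = (\<Sum>i\<in>I. mul (f i) y)"
  by (induction I rule: infinite_finite_induct) (auto simp: mul_add_left)
lemma mul_sum_right: "mul y (\<Sum>i\<in>I. f i) = (\<Sum>i\<in>I. mul y (f i))"
  by (induction I rule: infinite_finite_induct) (auto simp: mul_add_right)

lemma mul_sum_scale:
  "mul (\<Sum>x\<in>F. scale (\<alpha> x) (X x)) (\<Sum>y\<in>G. scale (\<beta> y) (Y y))
   = (\<Sum>(x,y)\<in>F\<times>G. scale (\<alpha> x * \<beta> y) (mul (X x) (Y y)))"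
  unfolding mul_sum_left mul_scale_left mul_sum_right mul_scale_right scale_sum_right scale_scale
  by (subst sum.swap) (simp add: sum.cartesian_product mult.commute)

lemma lin_ext_superset:
  assumes "finite F" "{m. p m \<noteq> 0} \<subseteq> F"
  shows "lin_ext scale p E = (\<Sum>m\<in>F. scale (p m) (E m))"
  unfolding lin_ext_def by (rule sum.mono_neutral_left) (use assms in auto)

lemma lin_ext_add:
  assumes "fsupp p" "fsupp q"
  shows "lin_ext scale (p + q) E = lin_ext scale p E + lin_ext scale q E"
proof -
  have fin: "finite ({m. p m \<noteq> 0} \<union> {m. q m \<noteq> 0})"
    using assms by (simp add: fsupp_def)
  show ?thesis
    by (subst (1 2 3) lin_ext_superset[OF fin]) (auto simp: scale_add_left sum.distrib)
qed

lemma lin_ext_smult: "fsupp p \<Longrightarrow> lin_ext scale (\<lambda>m. c * p m) E = scale c (lin_ext scale p E)"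
  unfolding fsupp_def
  by (subst (1 2) lin_ext_superset[of "{m. p m \<noteq> 0}"]) (auto simp: scale_sum_right scale_scale)

lemma lin_ext_diff:
  assumes "fsupp p" "fsupp q"
  shows "lin_ext scale (p - q) E = lin_ext scale p E - lin_ext scale q E"
proof -
  have "p - q = p + (\<lambda>m. (-1) * q m)"
    by (rule ext) simp
  then have "lin_ext scale (p - q) E = lin_ext scale p E + lin_ext scale (\<lambda>m. (-1) * q m) E"
    using assms by (simp only: lin_ext_add fsupp_smult)
  also have "lin_ext scale (\<lambda>m. (-1) * q m) E = - lin_ext scale q E"
    using lin_ext_smult[OF assms(2)] by (simp only: scale_minus_one)
  finally show ?thesis
    by (simp only: diff_conv_add_uminus)
qed

lemma lin_ext_zero [simp]: "lin_ext scale 0 E = 0"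
  by (simp add: lin_ext_def)

lemma lin_ext_sum:
  "finite T \<Longrightarrow> (\<And>a. a \<in> T \<Longrightarrow> fsupp (g a)) \<Longrightarrow>
   lin_ext scale (\<Sum>a\<in>T. g a) E = (\<Sum>a\<in>T. lin_ext scale (g a) E)"
  by (induction T rule: finite_induct) (auto simp: lin_ext_add fsupp_sum)

lemma lin_ext_delta: "lin_ext scale (\<lambda>m. if m = m0 then c else 0) E = scale c (E m0)"
  by (cases "c = 0") (auto simp: lin_ext_def)

lemma lin_ext_mono: "lin_ext scale (mono m) E = E m"
  using lin_ext_delta[of m 1 E] by (simp add: mono_def)

lemma lin_ext_lin_span_zero:
  assumes "T \<in> lin_span X" and "\<And>x. x \<in> X \<Longrightarrow> fsupp x \<and> lin_ext scale x E = 0"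
  shows "lin_ext scale T E = 0"
proof -
  obtain G r where T: "T = (\<Sum>x\<in>G. (\<lambda>y. r x * x y))" and "finite G" "G \<subseteq> X"
    using assms(1) unfolding lin_span_def by blast
  then have "lin_ext scale T E = (\<Sum>x\<in>G. scale (r x) (lin_ext scale x E))"
    using assms(2) by (simp add: lin_ext_sum fsupp_smult lin_ext_smult subset_iff)
  also have "\<dots> = 0"
    by (rule sum.neutral) (use \<open>G \<subseteq> X\<close> assms(2) in auto)
  finally show ?thesis .
qed

end

lemma pmul_support_subset:
  "{m. pmul p q m \<noteq> 0} \<subseteq> (\<lambda>(s,t). M s t) ` ({s. p s \<noteq> 0} \<times> {t. q t \<noteq> 0})"
proof
  fix m assume "m \<in> {m. pmul p q m \<noteq> 0}"
  then show "m \<in> (\<lambda>(s,t). M s t) ` ({s. p s \<noteq> 0} \<times> {t. q t \<noteq> 0})"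
    by (cases m) (auto simp: pmul_def)
qed

lemma fsupp_pmul: "fsupp p \<Longrightarrow> fsupp q \<Longrightarrow> fsupp (pmul p q)"
  unfolding fsupp_def by (rule finite_subset[OF pmul_support_subset]) auto

lemma fsupp_evmon: "\<forall>i. fsupp (\<sigma> i) \<Longrightarrow> fsupp (evmon \<sigma> t)"
  by (induction t) (auto simp: fsupp_pmul)

lemma psubst_eq_sum: "psubst \<sigma> g = (\<Sum>t\<in>{t. g t \<noteq> 0}. (\<lambda>m. g t * evmon \<sigma> t m))"
  by (rule ext) (simp add: psubst_def sum_apply)

lemma fsupp_psubst: "fsupp g \<Longrightarrow> \<forall>i. fsupp (\<sigma> i) \<Longrightarrow> fsupp (psubst \<sigma> g)"
  unfolding psubst_eq_sum
  by (rule fsupp_sum) (auto simp: fsupp_def[of g] intro!: fsupp_smult fsupp_evmon)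

lemma tideal_fsupp: "p \<in> tideal S \<Longrightarrow> \<forall>g\<in>S. fsupp g \<Longrightarrow> fsupp p"
  by (induction rule: tideal.induct) (auto simp: fsupp_psubst fsupp_add fsupp_smult fsupp_pmul)

context bilinear_algebra
begin

lemma lin_ext_pmul:
  assumes "fsupp p" "fsupp q"
  shows "lin_ext scale (pmul p q) (eval_mon mul a)
       = mul (lin_ext scale p (eval_mon mul a)) (lin_ext scale q (eval_mon mul a))"
proof -
  let ?P = "{s. p s \<noteq> 0}" and ?Q = "{t. q t \<noteq> 0}"
  have fin: "finite ?P" "finite ?Q"
    using assms by (auto simp: fsupp_def)
  have inj: "inj_on (\<lambda>(s,t). M s t) (?P \<times> ?Q)"
    by (auto simp: inj_on_def)
  have "lin_ext scale (pmul p q) (eval_mon mul a)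
      = (\<Sum>m\<in>(\<lambda>(s,t). M s t) ` (?P \<times> ?Q). scale (pmul p q m) (eval_mon mul a m))"
    by (rule lin_ext_superset[OF _ pmul_support_subset]) (use fin in auto)
  also have "\<dots> = (\<Sum>(s,t)\<in>?P \<times> ?Q. scale (p s * q t) (mul (eval_mon mul a s) (eval_mon mul a t)))"
    by (subst sum.reindex[OF inj]) (auto simp: pmul_def intro!: sum.cong)
  also have "\<dots> = mul (lin_ext scale p (eval_mon mul a)) (lin_ext scale q (eval_mon mul a))"
    by (simp add: mul_sum_scale lin_ext_def)
  finally show ?thesis .
qed

lemma lin_ext_evmon:
  "\<forall>i. fsupp (\<sigma> i) \<Longrightarrow>
   lin_ext scale (evmon \<sigma> t) (eval_mon mul a) = eval_mon mul (\<lambda>i. lin_ext scale (\<sigma> i) (eval_mon mul a)) t"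
  by (induction t) (auto simp: lin_ext_pmul fsupp_evmon)

lemma lin_ext_psubst:
  assumes "fsupp g" "\<forall>i. fsupp (\<sigma> i)"
  shows "lin_ext scale (psubst \<sigma> g) (eval_mon mul a)
       = lin_ext scale g (eval_mon mul (\<lambda>i. lin_ext scale (\<sigma> i) (eval_mon mul a)))"
proof -
  have "lin_ext scale (psubst \<sigma> g) (eval_mon mul a)
      = (\<Sum>t\<in>{t. g t \<noteq> 0}. lin_ext scale (\<lambda>m. g t * evmon \<sigma> t m) (eval_mon mul a))"
    unfolding psubst_eq_sum
    by (rule lin_ext_sum) (use assms in \<open>auto simp: fsupp_def[of g] intro!: fsupp_smult fsupp_evmon\<close>)
  also have "\<dots> = (\<Sum>t\<in>{t. g t \<noteq> 0}. scale (g t) (eval_mon mul (\<lambda>i. lin_ext scale (\<sigma> i) (eval_mon mul a)) t))"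
    using assms by (auto simp: lin_ext_smult fsupp_evmon lin_ext_evmon intro!: sum.cong)
  finally show ?thesis
    by (simp add: lin_ext_def)
qed

lemma tideal_eval_zero:
  assumes "in_var S scale mul" "\<forall>g\<in>S. fsupp g" "p \<in> tideal S"
  shows "lin_ext scale p (eval_mon mul a) = 0"
  using assms(3)
proof (induction arbitrary: a rule: tideal.induct)
  case (gen g \<sigma>)
  then show ?case
    using assms(1,2) by (simp add: lin_ext_psubst in_var_def eval_pol_eq_lin_ext)
next
  case zero
  then show ?case by (rule lin_ext_zero)
next
  case (add p q)
  have "fsupp p" "fsupp q"
    using add.hyps assms(2) tideal_fsupp by blast+
  then show ?case
    by (simp only: lin_ext_add add.IH add_0)
next
  case (smult p c)
  then show ?case using assms by (simp add: lin_ext_smult tideal_fsupp)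
next
  case (mulr p q)
  then show ?case using assms by (simp add: lin_ext_pmul tideal_fsupp)
next
  case (mull p q)
  then show ?case using assms by (simp add: lin_ext_pmul tideal_fsupp)
qed

end

section \<open>Multilinear differential polynomials\<close>

text \<open>A differential monomial is encoded by a finite partial map K: the variable x_i occurs in it,
  differentiated k times, iff K i = Some k.\<close>
type_synonym dkey = "nat \<Rightarrow> nat option"

definition dmul :: "(dkey \<Rightarrow> 'k::comm_ring_1) \<Rightarrow> (dkey \<Rightarrow> 'k) \<Rightarrow> dkey \<Rightarrow> 'k" where
  "dmul p q K = (\<Sum>D\<in>Pow (dom K). p (K |` D) * q (K |` (dom K - D)))"

definition raised :: "dkey \<Rightarrow> nat set" where
  "raised K = {i. \<exists>j. K i = Some (Suc j)}"

definition lower :: "nat \<Rightarrow> dkey \<Rightarrow> dkey" where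
  "lower i K = K(i \<mapsto> the (K i) - 1)"

definition raise :: "nat \<Rightarrow> dkey \<Rightarrow> dkey" where
  "raise i K = K(i \<mapsto> Suc (the (K i)))"

definition dder :: "(dkey \<Rightarrow> 'k::comm_ring_1) \<Rightarrow> dkey \<Rightarrow> 'k" where
  "dder p K = (\<Sum>i\<in>raised K. p (lower i K))"

definition dscale :: "'k::comm_ring_1 \<Rightarrow> (dkey \<Rightarrow> 'k) \<Rightarrow> dkey \<Rightarrow> 'k" where
  "dscale c p = (\<lambda>K. c * p K)"

definition dnov :: "(dkey \<Rightarrow> 'k::comm_ring_1) \<Rightarrow> (dkey \<Rightarrow> 'k) \<Rightarrow> dkey \<Rightarrow> 'k" where
  "dnov p q = dmul p (dder q)"

lemma dmul_add_left: "dmul (p + q) r = dmul p r + dmul q r"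
  by (rule ext) (simp add: dmul_def distrib_right sum.distrib)
lemma dmul_add_right: "dmul r (p + q) = dmul r p + dmul r q"
  by (rule ext) (simp add: dmul_def distrib_left sum.distrib)
lemma dmul_scale_left: "dmul (dscale c p) q = dscale c (dmul p q)"
  by (rule ext) (simp add: dmul_def dscale_def sum_distrib_left mult.assoc)
lemma dmul_scale_right: "dmul p (dscale c q) = dscale c (dmul p q)"
  by (rule ext) (simp add: dmul_def dscale_def sum_distrib_left mult.left_commute)
lemma dder_add: "dder (p + q) = dder p + dder q"
  by (rule ext) (simp add: dder_def sum.distrib)
lemma dder_scale: "dder (dscale c p) = dscale c (dder p)"
  by (rule ext) (simp add: dder_def dscale_def sum_distrib_left)

lemma dmul_commute: "dmul p q = dmul q p"
proof (rule ext)
  fix K :: dkey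
  show "dmul p q K = dmul q p K"
    unfolding dmul_def
    by (rule sum.reindex_bij_witness[where i="\<lambda>D. dom K - D" and j="\<lambda>D. dom K - D"])
       (auto simp: mult.commute Diff_Diff_Int Int_absorb1)
qed

lemma dmul_restrict:
  "D \<subseteq> dom K \<Longrightarrow> dmul p q (K |` D) = (\<Sum>E\<in>Pow D. p (K |` E) * q (K |` (D - E)))"
  unfolding dmul_def
  by (rule sum.cong) (auto simp: Int_absorb1 Int_absorb2 intro!: arg_cong2[where f="\<lambda>x y. p (K |` x) * q (K |` y)"])

lemma dmul_assoc: "dmul (dmul p q) r = dmul p (dmul q r)"
proof (rule ext)
  fix K :: dkey
  let ?X = "dom K"
  show "dmul (dmul p q) r K = dmul p (dmul q r) K"
  proof (cases "finite ?X")
    case False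
    then show ?thesis by (simp add: dmul_def)
  next
    case True
    have diff: "?X - E - (D - E) = ?X - D" if "E \<subseteq> D" for D E
      using that by auto
    have "dmul (dmul p q) r K
        = (\<Sum>D\<in>Pow ?X. \<Sum>E\<in>Pow D. p (K |` E) * q (K |` (D - E)) * r (K |` (?X - D)))"
      unfolding dmul_def[of "dmul p q"]
      by (rule sum.cong[OF refl]) (simp add: dmul_restrict sum_distrib_right)
    also have "\<dots> = (\<Sum>(D,E)\<in>Sigma (Pow ?X) Pow. p (K |` E) * q (K |` (D - E)) * r (K |` (?X - D)))"
      by (rule sum.Sigma) (use True in \<open>auto intro: finite_subset\<close>)
    also have "\<dots> = (\<Sum>(E,F)\<in>Sigma (Pow ?X) (\<lambda>E. Pow (?X - E)).
                       p (K |` E) * (q (K |` F) * r (K |` (?X - E - F))))"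
      by (rule sum.reindex_bij_witness[where i="\<lambda>(E,F). (E \<union> F, E)" and j="\<lambda>(D,E). (E, D - E)"])
         (auto simp: mult.assoc diff)
    also have "\<dots> = (\<Sum>E\<in>Pow ?X. \<Sum>F\<in>Pow (?X - E). p (K |` E) * (q (K |` F) * r (K |` (?X - E - F))))"
      by (rule sum.Sigma[symmetric]) (use True in auto)
    also have "\<dots> = dmul p (dmul q r) K"
      unfolding dmul_def[of p]
      by (rule sum.cong[OF refl]) (auto simp: dmul_restrict sum_distrib_left Diff_Diff_Int)
    finally show ?thesis .
  qed
qed

lemma dmul_left_commute: "dmul x (dmul y w) = dmul y (dmul x w)"
  by (metis dmul_assoc dmul_commute)

lemma raised_subset_dom: "raised K \<subseteq> dom K"
  by (auto simp: raised_def)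
lemma dom_lower: "i \<in> raised K \<Longrightarrow> dom (lower i K) = dom K"
  by (auto simp: raised_def lower_def)
lemma raised_restrict: "raised (K |` D) = raised K \<inter> D"
  by (auto simp: raised_def restrict_map_def)
lemma lower_restrict_in: "i \<in> D \<Longrightarrow> lower i K |` D = lower i (K |` D)"
  by (rule ext) (auto simp: lower_def restrict_map_def)
lemma lower_restrict_out: "i \<notin> D \<Longrightarrow> lower i K |` D = K |` D"
  by (rule ext) (auto simp: lower_def restrict_map_def)
lemma raise_lower: "i \<in> raised K \<Longrightarrow> raise i (lower i K) = K"
  by (rule ext) (auto simp: raise_def lower_def raised_def)

lemma raise_eq_iff: "i \<in> dom K \<Longrightarrow> K' = raise i K \<longleftrightarrow> i \<in> raised K' \<and> K = lower i K'"
  by (auto simp: raised_def raise_def lower_def raise_lower intro!: ext)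

lemma dder_dmul: "dder (dmul p q) = dmul (dder p) q + dmul p (dder q)"
proof (rule ext)
  fix K :: dkey
  let ?X = "dom K"
  show "dder (dmul p q) K = (dmul (dder p) q + dmul p (dder q)) K"
  proof (cases "finite ?X")
    case False
    then show ?thesis by (simp add: dmul_def dder_def dom_lower)
  next
    case True
    have fin: "finite (raised K)"
      using True raised_subset_dom finite_subset by blast
    have split: "(\<Sum>i\<in>raised K. p (lower i K |` D) * q (lower i K |` (?X - D)))
          = dder p (K |` D) * q (K |` (?X - D)) + p (K |` D) * dder q (K |` (?X - D))"
      if "D \<subseteq> ?X" for D
    proof -
      have "raised K \<inter> (?X - D) = raised K - D"
        using raised_subset_dom by blast
      then show ?thesis
        unfolding sum.Int_Diff[OF fin, of _ D] dder_def raised_restrict sum_distrib_left sum_distrib_right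
        by (auto simp: lower_restrict_in lower_restrict_out raised_subset_dom[THEN subsetD] intro!: sum.cong)
    qed
    have "dder (dmul p q) K = (\<Sum>i\<in>raised K. \<Sum>D\<in>Pow ?X. p (lower i K |` D) * q (lower i K |` (?X - D)))"
      unfolding dder_def dmul_def by (rule sum.cong[OF refl]) (simp add: dom_lower)
    also have "\<dots> = (\<Sum>D\<in>Pow ?X. \<Sum>i\<in>raised K. p (lower i K |` D) * q (lower i K |` (?X - D)))"
      by (rule sum.swap)
    also have "\<dots> = (dmul (dder p) q + dmul p (dder q)) K"
      by (simp add: split dmul_def sum.distrib)
    finally show ?thesis .
  qed
qed

lemma is_algebra_dnov: "is_algebra (dscale :: 'k::field \<Rightarrow> _) dnov"
  unfolding is_algebra_def dnov_def
  by (simp add: dmul_add_left dmul_add_right dder_add dmul_scale_left dmul_scale_right dder_scale)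
     (auto simp: dscale_def algebra_simps)

interpretation dnov: bilinear_algebra "dscale :: 'k::field \<Rightarrow> _" dnov
  by unfold_locales (rule is_algebra_dnov)

lemma dnov_left_symmetric:
  "dnov (dnov x y) z - dnov x (dnov y z) - dnov (dnov y x) z + dnov y (dnov x z) = 0"
  by (simp add: dnov_def dmul_assoc dder_dmul dmul_add_right dmul_left_commute[of x y])

lemma dnov_right_commutative: "dnov (dnov x y) z - dnov (dnov x z) y = 0"
  by (simp add: dnov_def dmul_assoc dmul_commute[of "dder y"])

lemma fsupp_nov_ids: "\<forall>g\<in>(nov_ids :: (mon \<Rightarrow> 'k::field) set). fsupp g"
  unfolding nov_ids_def by (auto intro!: fsupp_diff fsupp_add fsupp_mono)

lemma in_var_nov_dnov: "in_var nov_ids (dscale :: 'k::field \<Rightarrow> _) dnov"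
  unfolding in_var_def nov_ids_def
  by (auto simp: is_algebra_dnov eval_pol_eq_lin_ext dnov.lin_ext_diff dnov.lin_ext_add
      fsupp_diff fsupp_add fsupp_mono dnov.lin_ext_mono dnov_left_symmetric dnov_right_commutative)

definition keys_on :: "(dkey \<Rightarrow> 'k::zero) \<Rightarrow> nat set \<Rightarrow> bool" where
  "keys_on p A \<longleftrightarrow> (\<forall>K. p K \<noteq> 0 \<longrightarrow> dom K = A)"

lemma dmul_keys_on:
  assumes "keys_on p A" "keys_on q B" "A \<inter> B = {}" "finite A" "finite B"
  shows "dmul p q K = (if dom K = A \<union> B then p (K |` A) * q (K |` B) else 0)"
proof -
  have term_zero: "p (K |` D) * q (K |` (dom K - D)) = 0" if "D \<subseteq> dom K" "D \<noteq> A \<or> dom K \<noteq> A \<union> B" for D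
  proof (rule ccontr)
    assume "p (K |` D) * q (K |` (dom K - D)) \<noteq> 0"
    then have "p (K |` D) \<noteq> 0" "q (K |` (dom K - D)) \<noteq> 0"
      by auto
    then have "dom (K |` D) = A" "dom (K |` (dom K - D)) = B"
      using assms(1,2) unfolding keys_on_def by blast+
    then have "D = A" "dom K - D = B"
      using that(1) by auto
    then show False
      using that by auto
  qed
  show ?thesis
  proof (cases "dom K = A \<union> B")
    case True
    have "dmul p q K = (\<Sum>D\<in>{A}. p (K |` D) * q (K |` (dom K - D)))"
      unfolding dmul_def
      by (rule sum.mono_neutral_right) (use True assms(4,5) term_zero in auto)
    moreover have "dom K - A = B"
      using True assms(3) by auto
    ultimately show ?thesis
      using True by simp
  next
    case False
    then show ?thesis
      unfolding dmul_def using term_zero by (auto intro: sum.neutral)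
  qed
qed

lemma keys_on_dmul:
  assumes "keys_on p A" "keys_on q B" "A \<inter> B = {}" "finite A" "finite B"
  shows "keys_on (dmul p q) (A \<union> B)"
  using dmul_keys_on[OF assms] unfolding keys_on_def by (metis mult_zero_left)

lemma restrict_map_add_eq: "dom K = A \<union> B \<Longrightarrow> K |` A ++ K |` B = K"
  by (rule ext) (auto simp: map_add_def restrict_map_def split: option.splits)

lemma restrict_map_add_left: "dom K1 = A \<Longrightarrow> dom K2 = B \<Longrightarrow> A \<inter> B = {} \<Longrightarrow> (K1 ++ K2) |` A = K1"
  by (rule ext) (auto simp: restrict_map_def map_add_def split: option.splits)
lemma restrict_map_add_right: "dom K1 = A \<Longrightarrow> dom K2 = B \<Longrightarrow> A \<inter> B = {} \<Longrightarrow> (K1 ++ K2) |` B = K2"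
  by (rule ext) (auto simp: restrict_map_def map_add_def split: option.splits)

lemma dmul_support_subset:
  assumes "keys_on p A" "keys_on q B" "A \<inter> B = {}" "finite A" "finite B"
  shows "{K. dmul p q K \<noteq> 0} \<subseteq> (\<lambda>(K1,K2). K1 ++ K2) ` ({K. p K \<noteq> 0} \<times> {K. q K \<noteq> 0})"
proof
  fix K assume "K \<in> {K. dmul p q K \<noteq> 0}"
  then have d: "dom K = A \<union> B" and "p (K |` A) \<noteq> 0" "q (K |` B) \<noteq> 0"
    using dmul_keys_on[OF assms, of K] by (auto split: if_splits)
  then show "K \<in> (\<lambda>(K1,K2). K1 ++ K2) ` ({K. p K \<noteq> 0} \<times> {K. q K \<noteq> 0})"
    using restrict_map_add_eq[OF d] by (auto intro!: image_eqI[where x="(K |` A, K |` B)"])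
qed

lemma fsupp_dmul:
  assumes "keys_on p A" "keys_on q B" "A \<inter> B = {}" "finite A" "finite B" "fsupp p" "fsupp q"
  shows "fsupp (dmul p q)"
  unfolding fsupp_def
  by (rule finite_subset[OF dmul_support_subset[OF assms(1-5)]]) (use assms(6,7) in \<open>auto simp: fsupp_def\<close>)

lemma keys_on_dder: "keys_on p A \<Longrightarrow> keys_on (dder p) A"
  unfolding keys_on_def dder_def
  by (metis (mono_tags, lifting) dom_lower sum.neutral)

lemma dder_eq_sum_raise:
  assumes "keys_on p A" "fsupp p" "finite A"
  shows "dder p = (\<Sum>(K,i)\<in>{K. p K \<noteq> 0} \<times> A. (\<lambda>K'. if K' = raise i K then p K else 0))"
proof (rule ext)
  fix K'
  let ?F = "{K. p K \<noteq> 0}"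
  have fin: "finite ?F"
    using assms(2) by (simp add: fsupp_def)
  have dom_F: "dom K = A" if "K \<in> ?F" for K
    using assms(1) that by (auto simp: keys_on_def)
  have inner: "(\<Sum>K\<in>?F. if K' = raise i K then p K else 0) = (if i \<in> raised K' then p (lower i K') else 0)"
    if "i \<in> A" for i
  proof -
    have "(\<Sum>K\<in>?F. if K' = raise i K then p K else 0)
        = (\<Sum>K\<in>?F. if K = lower i K' then (if i \<in> raised K' then p K else 0) else 0)"
      using raise_eq_iff[of i _ K'] dom_F that by (intro sum.cong) auto
    also have "\<dots> = (if i \<in> raised K' then p (lower i K') else 0)"
      by (simp add: sum.delta[OF fin])
    finally show ?thesis .
  qed
  have off_A: "p (lower i K') = 0" if "i \<in> raised K'" "dom K' \<noteq> A" for i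
    using assms(1) that dom_lower unfolding keys_on_def by metis
  have "(\<Sum>(K,i)\<in>?F \<times> A. (\<lambda>K'. if K' = raise i K then p K else 0)) K'
      = (\<Sum>(K,i)\<in>?F \<times> A. if K' = raise i K then p K else 0)"
    by (simp add: sum_apply split_def)
  also have "\<dots> = (\<Sum>K\<in>?F. \<Sum>i\<in>A. if K' = raise i K then p K else 0)"
    by (rule sum.cartesian_product[symmetric])
  also have "\<dots> = (\<Sum>i\<in>A. \<Sum>K\<in>?F. if K' = raise i K then p K else 0)"
    by (rule sum.swap)
  also have "\<dots> = (\<Sum>i\<in>A \<inter> raised K'. p (lower i K'))"
    by (simp add: inner sum.inter_restrict[OF assms(3)])
  also have "\<dots> = dder p K'"
  proof (cases "dom K' = A")
    case True
    then have "A \<inter> raised K' = raised K'"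
      using raised_subset_dom by blast
    then show ?thesis by (simp add: dder_def)
  next
    case False
    then show ?thesis
      by (simp add: dder_def off_A sum.neutral)
  qed
  finally show "dder p K' = (\<Sum>(K,i)\<in>?F \<times> A. (\<lambda>K'. if K' = raise i K then p K else 0)) K'"
    by simp
qed

lemma fsupp_dder:
  assumes "keys_on p A" "fsupp p" "finite A"
  shows "fsupp (dder p)"
  unfolding dder_eq_sum_raise[OF assms]
  by (rule fsupp_sum) (use assms in \<open>auto simp: fsupp_def\<close>)

definition eval_diff_mon :: "('a \<Rightarrow> 'a \<Rightarrow> 'a) \<Rightarrow> ('a \<Rightarrow> 'a) \<Rightarrow> (nat \<Rightarrow> 'a) \<Rightarrow> mon \<Rightarrow> dkey \<Rightarrow> 'a" where
  "eval_diff_mon mul d a u K = eval_mon mul (\<lambda>i. (d ^^ the (K i)) (a i)) u"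

lemma eval_diff_mon_M:
  "eval_diff_mon mul d a (M s t) K = mul (eval_diff_mon mul d a s K) (eval_diff_mon mul d a t K)"
  by (simp add: eval_diff_mon_def)

lemma eval_diff_mon_cong:
  "(\<And>i. i \<in> set (leaves u) \<Longrightarrow> K i = K' i) \<Longrightarrow> eval_diff_mon mul d a u K = eval_diff_mon mul d a u K'"
  unfolding eval_diff_mon_def by (induction u) auto

locale derivation_algebra = bilinear_algebra +
  fixes d :: "'a::ab_group_add \<Rightarrow> 'a"
  assumes derivation: "is_derivation scale mul d"
begin

lemma d_add: "d (x + y) = d x + d y"
  using derivation unfolding is_derivation_def by blast
lemma d_scale: "d (scale c x) = scale c (d x)"
  using derivation unfolding is_derivation_def by blast
lemma d_mul: "d (mul x y) = mul (d x) y + mul x (d y)"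
  using derivation unfolding is_derivation_def by blast
lemma d_zero: "d 0 = 0"
  using d_add[of 0 0] by simp
lemma d_sum: "d (\<Sum>i\<in>I. f i) = (\<Sum>i\<in>I. d (f i))"
  by (induction I rule: infinite_finite_induct) (auto simp: d_add d_zero)

lemma lin_ext_dmul:
  assumes p: "keys_on p (set (leaves s))" "fsupp p" and q: "keys_on q (set (leaves t))" "fsupp q"
    and disj: "set (leaves s) \<inter> set (leaves t) = {}"
  shows "lin_ext scale (dmul p q) (eval_diff_mon mul d a (M s t))
       = mul (lin_ext scale p (eval_diff_mon mul d a s)) (lin_ext scale q (eval_diff_mon mul d a t))"
proof -
  let ?A = "set (leaves s)" and ?B = "set (leaves t)"
  let ?P = "{K. p K \<noteq> 0}" and ?Q = "{K. q K \<noteq> 0}"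
  have fin: "finite ?P" "finite ?Q"
    using p q by (auto simp: fsupp_def)
  have dom_P: "dom K = ?A" if "K \<in> ?P" for K
    using p that by (auto simp: keys_on_def)
  have dom_Q: "dom K = ?B" if "K \<in> ?Q" for K
    using q that by (auto simp: keys_on_def)
  have inj: "inj_on (\<lambda>(K1,K2). K1 ++ K2) (?P \<times> ?Q)"
    by (rule inj_onI) (metis (no_types, lifting) SigmaE case_prod_conv dom_P dom_Q disj
        restrict_map_add_left restrict_map_add_right)
  have summand: "scale (dmul p q (K1 ++ K2)) (eval_diff_mon mul d a (M s t) (K1 ++ K2))
      = scale (p K1 * q K2) (mul (eval_diff_mon mul d a s K1) (eval_diff_mon mul d a t K2))"
    if "K1 \<in> ?P" "K2 \<in> ?Q" for K1 K2
  proof -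
    have d1: "dom K1 = ?A" and d2: "dom K2 = ?B"
      using that dom_P dom_Q by auto
    have "dmul p q (K1 ++ K2) = p K1 * q K2"
      using dmul_keys_on[OF p(1) q(1) disj finite_set finite_set, of "K1 ++ K2"]
        restrict_map_add_left[OF d1 d2 disj] restrict_map_add_right[OF d1 d2 disj] d1 d2
      by (auto simp: Un_commute)
    moreover have "eval_diff_mon mul d a s (K1 ++ K2) = eval_diff_mon mul d a s K1"
      by (rule eval_diff_mon_cong) (use d2 disj in \<open>auto simp: map_add_def split: option.splits\<close>)
    moreover have "eval_diff_mon mul d a t (K1 ++ K2) = eval_diff_mon mul d a t K2"
      by (rule eval_diff_mon_cong) (use d2 in \<open>auto simp: map_add_def split: option.splits\<close>)
    ultimately show ?thesis
      by (simp add: eval_diff_mon_M)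
  qed
  have "lin_ext scale (dmul p q) (eval_diff_mon mul d a (M s t))
      = (\<Sum>K\<in>(\<lambda>(K1,K2). K1 ++ K2) ` (?P \<times> ?Q). scale (dmul p q K) (eval_diff_mon mul d a (M s t) K))"
    by (rule lin_ext_superset[OF _ dmul_support_subset[OF p(1) q(1) disj]]) (use fin in auto)
  also have "\<dots> = (\<Sum>(K1,K2)\<in>?P \<times> ?Q. scale (p K1 * q K2) (mul (eval_diff_mon mul d a s K1) (eval_diff_mon mul d a t K2)))"
    unfolding sum.reindex[OF inj] by (rule sum.cong) (auto simp: summand)
  also have "\<dots> = mul (lin_ext scale p (eval_diff_mon mul d a s)) (lin_ext scale q (eval_diff_mon mul d a t))"
    by (simp add: mul_sum_scale lin_ext_def)
  finally show ?thesis .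
qed

lemma d_eval_diff_mon:
  "distinct (leaves u) \<Longrightarrow> d (eval_diff_mon mul d a u K) = (\<Sum>i\<in>set (leaves u). eval_diff_mon mul d a u (raise i K))"
proof (induction u arbitrary: K)
  case (V i)
  then show ?case by (simp add: eval_diff_mon_def raise_def)
next
  case (M s t)
  have disj: "set (leaves s) \<inter> set (leaves t) = {}"
    using M.prems by auto
  have raise_t: "eval_diff_mon mul d a t (raise i K) = eval_diff_mon mul d a t K" if "i \<in> set (leaves s)" for i
    by (rule eval_diff_mon_cong) (use that disj in \<open>auto simp: raise_def\<close>)
  have raise_s: "eval_diff_mon mul d a s (raise i K) = eval_diff_mon mul d a s K" if "i \<in> set (leaves t)" for i
    by (rule eval_diff_mon_cong) (use that disj in \<open>auto simp: raise_def\<close>)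
  have "d (eval_diff_mon mul d a (M s t) K)
      = mul (d (eval_diff_mon mul d a s K)) (eval_diff_mon mul d a t K)
        + mul (eval_diff_mon mul d a s K) (d (eval_diff_mon mul d a t K))"
    by (simp add: eval_diff_mon_M d_mul)
  also have "\<dots> = (\<Sum>i\<in>set (leaves s). eval_diff_mon mul d a (M s t) (raise i K))
                + (\<Sum>i\<in>set (leaves t). eval_diff_mon mul d a (M s t) (raise i K))"
    using M by (simp add: mul_sum_left mul_sum_right eval_diff_mon_M raise_s raise_t)
  also have "\<dots> = (\<Sum>i\<in>set (leaves (M s t)). eval_diff_mon mul d a (M s t) (raise i K))"
    by (simp add: sum.union_disjoint[OF finite_set finite_set disj])
  finally show ?case .
qed

lemma lin_ext_dder:
  assumes "keys_on p (set (leaves u))" "distinct (leaves u)" "fsupp p"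
  shows "lin_ext scale (dder p) (eval_diff_mon mul d a u) = d (lin_ext scale p (eval_diff_mon mul d a u))"
proof -
  let ?A = "set (leaves u)" and ?F = "{K. p K \<noteq> 0}"
  have "lin_ext scale (dder p) (eval_diff_mon mul d a u)
      = (\<Sum>(K,i)\<in>?F \<times> ?A. lin_ext scale (\<lambda>K'. if K' = raise i K then p K else 0) (eval_diff_mon mul d a u))"
    unfolding dder_eq_sum_raise[OF assms(1,3) finite_set] split_def
    by (rule lin_ext_sum) (use assms(3) in \<open>auto simp: fsupp_def\<close>)
  also have "\<dots> = (\<Sum>K\<in>?F. scale (p K) (\<Sum>i\<in>?A. eval_diff_mon mul d a u (raise i K)))"
    by (simp add: lin_ext_delta sum.cartesian_product[symmetric] scale_sum_right)
  also have "\<dots> = d (lin_ext scale p (eval_diff_mon mul d a u))"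
    by (simp add: d_eval_diff_mon[OF assms(2)] d_scale lin_ext_def d_sum)
  finally show ?thesis .
qed

end

section \<open>The pairing of Var(n) \<otimes> Nov(n) with a derived algebra\<close>

definition dvar :: "nat \<Rightarrow> dkey \<Rightarrow> 'k::comm_ring_1" where
  "dvar i = (\<lambda>K. if K = [i \<mapsto> 0] then 1 else 0)"

definition nov_word :: "mon \<Rightarrow> dkey \<Rightarrow> 'k::comm_ring_1" where
  "nov_word w = eval_mon dnov dvar w"

definition pairing :: "('k::comm_ring_1 \<Rightarrow> 'a::comm_monoid_add \<Rightarrow> 'a) \<Rightarrow> ('a \<Rightarrow> 'a \<Rightarrow> 'a) \<Rightarrow> ('a \<Rightarrow> 'a)
    \<Rightarrow> (nat \<Rightarrow> 'a) \<Rightarrow> mon \<times> mon \<Rightarrow> 'a" where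
  "pairing scale mul d a x = lin_ext scale (nov_word (snd x)) (eval_diff_mon mul d a (fst x))"

lemma leaves_fst_phi: "leaves (fst (phi m)) = dleaves m"
  by (induction m) auto

lemma leaves_snd_phi:
  "set (leaves (snd (phi m))) = set (dleaves m) \<and> (distinct (dleaves m) \<longrightarrow> distinct (leaves (snd (phi m))))"
  by (induction m) auto

lemma nov_word_fsupp_keys_on:
  "distinct (leaves w) \<Longrightarrow>
   fsupp (nov_word w :: dkey \<Rightarrow> 'k::comm_ring_1) \<and> keys_on (nov_word w :: dkey \<Rightarrow> 'k) (set (leaves w))"
proof (induction w)
  case (V i)
  then show ?case by (auto simp: nov_word_def dvar_def fsupp_def keys_on_def)
next
  case (M s t)
  then have s: "fsupp (nov_word s :: dkey \<Rightarrow> 'k)" "keys_on (nov_word s :: dkey \<Rightarrow> 'k) (set (leaves s))"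
    and t: "fsupp (nov_word t :: dkey \<Rightarrow> 'k)" "keys_on (nov_word t :: dkey \<Rightarrow> 'k) (set (leaves t))"
    and disj: "set (leaves s) \<inter> set (leaves t) = {}"
    by auto
  have "nov_word (M s t) = dmul (nov_word s) (dder (nov_word t :: dkey \<Rightarrow> 'k))"
    by (simp add: nov_word_def dnov_def)
  then show ?case
    using fsupp_dmul[OF s(2) keys_on_dder[OF t(2)] disj finite_set finite_set s(1) fsupp_dder[OF t(2,1) finite_set]]
      keys_on_dmul[OF s(2) keys_on_dder[OF t(2)] disj finite_set finite_set]
    by simp
qed

context derivation_algebra
begin

lemma pairing_prec_succ:
  assumes u: "distinct (leaves u1 @ leaves u2)"
    and w: "distinct (leaves w1)" "set (leaves w1) = set (leaves u1)"
           "distinct (leaves w2)" "set (leaves w2) = set (leaves u2)"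
  shows "pairing scale mul d a (M u1 u2, M w1 w2) = mul (pairing scale mul d a (u1, w1)) (d (pairing scale mul d a (u2, w2)))"
    and "pairing scale mul d a (M u1 u2, M w2 w1) = mul (d (pairing scale mul d a (u1, w1))) (pairing scale mul d a (u2, w2))"
proof -
  have disj: "set (leaves u1) \<inter> set (leaves u2) = {}" and dist: "distinct (leaves u1)" "distinct (leaves u2)"
    using u by auto
  have w1: "fsupp (nov_word w1 :: dkey \<Rightarrow> 'b)" "keys_on (nov_word w1 :: dkey \<Rightarrow> 'b) (set (leaves u1))"
    and w2: "fsupp (nov_word w2 :: dkey \<Rightarrow> 'b)" "keys_on (nov_word w2 :: dkey \<Rightarrow> 'b) (set (leaves u2))"
    using nov_word_fsupp_keys_on[where 'k='b, OF w(1)] nov_word_fsupp_keys_on[where 'k='b, OF w(3)] by (simp_all add: w(2,4))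
  note dder1 = keys_on_dder[OF w1(2)] fsupp_dder[OF w1(2,1) finite_set]
  note dder2 = keys_on_dder[OF w2(2)] fsupp_dder[OF w2(2,1) finite_set]
  show "pairing scale mul d a (M u1 u2, M w1 w2) = mul (pairing scale mul d a (u1, w1)) (d (pairing scale mul d a (u2, w2)))"
    using lin_ext_dmul[OF w1(2,1) dder2 disj] lin_ext_dder[OF w2(2) dist(2) w2(1)]
    by (simp add: pairing_def nov_word_def dnov_def)
  show "pairing scale mul d a (M u1 u2, M w2 w1) = mul (d (pairing scale mul d a (u1, w1))) (pairing scale mul d a (u2, w2))"
    using lin_ext_dmul[OF dder1 w2(2,1) disj] lin_ext_dder[OF w1(2) dist(1) w1(1)]
    by (simp add: pairing_def nov_word_def dnov_def dmul_commute)
qed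

lemma eval_dmon_eq_pairing:
  "distinct (dleaves m) \<Longrightarrow> eval_dmon mul d a m = pairing scale mul d a (phi m)"
proof (induction m)
  case (DV i)
  then show ?case
    by (simp add: pairing_def nov_word_def dvar_def lin_ext_delta eval_diff_mon_def)
next
  case (Prec s t)
  then show ?case
    using pairing_prec_succ(1)[of "fst (phi s)" "fst (phi t)" "snd (phi s)" "snd (phi t)"]
    using leaves_snd_phi[of s] leaves_snd_phi[of t] by (simp add: leaves_fst_phi)
next
  case (Succ s t)
  then show ?case
    using pairing_prec_succ(2)[of "fst (phi s)" "fst (phi t)" "snd (phi s)" "snd (phi t)"]
    using leaves_snd_phi[of s] leaves_snd_phi[of t] by (simp add: leaves_fst_phi)
qed

lemma eval_dpol_eq_lin_ext_tens_image:
  assumes "fsupp f" "\<forall>m. f m \<noteq> 0 \<longrightarrow> distinct (dleaves m)"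
  shows "eval_dpol scale mul d a f = lin_ext scale (tens_image f) (pairing scale mul d a)"
proof -
  let ?F = "{m. f m \<noteq> 0}" and ?\<Psi> = "pairing scale mul d a"
  have fin: "finite ?F"
    using assms(1) by (simp add: fsupp_def)
  have support: "{x. tens_image f x \<noteq> 0} \<subseteq> phi ` ?F"
  proof
    fix x
    assume "x \<in> {x. tens_image f x \<noteq> 0}"
    then have "tens_image f x \<noteq> 0"
      by simp
    then have "{m. f m \<noteq> 0 \<and> phi m = x} \<noteq> {}"
      unfolding tens_image_def by (metis sum.empty)
    then show "x \<in> phi ` ?F"
      by auto
  qed
  have "eval_dpol scale mul d a f = (\<Sum>m\<in>?F. scale (f m) (?\<Psi> (phi m)))"
    unfolding eval_dpol_def by (rule sum.cong[OF refl]) (simp add: eval_dmon_eq_pairing assms(2))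
  also have "\<dots> = (\<Sum>x\<in>phi ` ?F. \<Sum>m\<in>{m \<in> ?F. phi m = x}. scale (f m) (?\<Psi> (phi m)))"
    by (rule sum.group[symmetric]) (use fin in auto)
  also have "\<dots> = (\<Sum>x\<in>phi ` ?F. scale (tens_image f x) (?\<Psi> x))"
    unfolding tens_image_def scale_sum_left by (rule sum.cong[OF refl], rule sum.cong) auto
  also have "\<dots> = lin_ext scale (tens_image f) ?\<Psi>"
    by (rule lin_ext_superset[symmetric]) (use fin support in auto)
  finally show ?thesis .
qed

lemma lin_ext_pairing_tens_var_tideal:
  assumes "in_var S scale mul" "\<forall>g\<in>S. fsupp g" "g \<in> tideal S"
  shows "lin_ext scale (tens g (mono w)) (pairing scale mul d a) = 0"
proof -
  let ?G = "{u. g u \<noteq> 0}" and ?N = "{K. (nov_word w :: dkey \<Rightarrow> 'b) K \<noteq> 0}"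
  have fin: "finite ?G"
    using tideal_fsupp[OF assms(3,2)] by (simp add: fsupp_def)
  have "lin_ext scale (tens g (mono w)) (pairing scale mul d a)
      = (\<Sum>x\<in>?G \<times> {w}. scale (tens g (mono w) x) (pairing scale mul d a x))"
    by (rule lin_ext_superset) (use fin in \<open>auto simp: tens_def mono_def split: if_splits\<close>)
  also have "\<dots> = (\<Sum>u\<in>?G. scale (g u) (\<Sum>K\<in>?N. scale (nov_word w K) (eval_diff_mon mul d a u K)))"
    by (simp add: sum.cartesian_product' tens_def mono_def pairing_def lin_ext_def)
  also have "\<dots> = (\<Sum>K\<in>?N. scale (nov_word w K) (\<Sum>u\<in>?G. scale (g u) (eval_diff_mon mul d a u K)))"
    unfolding scale_sum_right scale_scale by (subst sum.swap) (simp add: mult.commute)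
  also have "\<dots> = 0"
  proof (rule sum.neutral, rule ballI)
    fix K
    have "(\<Sum>u\<in>?G. scale (g u) (eval_diff_mon mul d a u K))
        = lin_ext scale g (eval_mon mul (\<lambda>i. (d ^^ the (K i)) (a i)))"
      by (simp add: lin_ext_def eval_diff_mon_def)
    also have "\<dots> = 0"
      by (rule tideal_eval_zero[OF assms])
    finally show "scale (nov_word w K) (\<Sum>u\<in>?G. scale (g u) (eval_diff_mon mul d a u K)) = 0"
      by simp
  qed
  finally show ?thesis .
qed

lemma lin_ext_pairing_tens_nov_tideal:
  assumes "h \<in> tideal nov_ids" "\<forall>w. h w \<noteq> 0 \<longrightarrow> distinct (leaves w)"
  shows "lin_ext scale (tens (mono u) h) (pairing scale mul d a) = 0"
proof -
  let ?H = "{w. h w \<noteq> 0}"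
  let ?N = "\<Union>w\<in>?H. {K. (nov_word w :: dkey \<Rightarrow> 'b) K \<noteq> 0}"
  have "fsupp h"
    using tideal_fsupp[OF assms(1) fsupp_nov_ids] .
  then have fin_H: "finite ?H"
    by (simp add: fsupp_def)
  have "fsupp (nov_word w :: dkey \<Rightarrow> 'b)" if "w \<in> ?H" for w
    using nov_word_fsupp_keys_on assms(2) that by blast
  then have fin_N: "finite ?N"
    using fin_H by (auto simp: fsupp_def)
  text \<open>The Novikov identities vanish in the differential algebra, coefficientwise in K.\<close>
  have coeff: "(\<Sum>w\<in>?H. h w * nov_word w K) = 0" for K
  proof -
    have "eval_pol dscale dnov dvar h = 0"
      using dnov.tideal_eval_zero[OF in_var_nov_dnov fsupp_nov_ids assms(1)]
      by (simp add: eval_pol_eq_lin_ext)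
    then have "eval_pol dscale dnov dvar h K = 0"
      by simp
    then show ?thesis
      by (simp add: eval_pol_def sum_apply dscale_def nov_word_def)
  qed
  have "lin_ext scale (tens (mono u) h) (pairing scale mul d a)
      = (\<Sum>x\<in>{u} \<times> ?H. scale (tens (mono u) h x) (pairing scale mul d a x))"
    by (rule lin_ext_superset) (use fin_H in \<open>auto simp: tens_def mono_def split: if_splits\<close>)
  also have "\<dots> = (\<Sum>w\<in>?H. scale (h w) (lin_ext scale (nov_word w) (eval_diff_mon mul d a u)))"
    by (simp add: sum.cartesian_product' tens_def mono_def pairing_def)
  also have "\<dots> = (\<Sum>w\<in>?H. scale (h w) (\<Sum>K\<in>?N. scale (nov_word w K) (eval_diff_mon mul d a u K)))"
    by (intro sum.cong refl arg_cong[where f="scale _"] lin_ext_superset fin_N) auto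
  also have "\<dots> = (\<Sum>K\<in>?N. scale (\<Sum>w\<in>?H. h w * nov_word w K) (eval_diff_mon mul d a u K))"
    unfolding scale_sum_right scale_scale scale_sum_left by (rule sum.swap)
  also have "\<dots> = 0"
    by (simp add: coeff)
  finally show ?thesis .
qed

lemma lin_ext_pairing_hadamard_kernel:
  assumes "in_var S scale mul" "\<forall>g\<in>S. fsupp g" "T \<in> hadamard_kernel S n"
  shows "lin_ext scale T (pairing scale mul d a) = 0"
  using assms(3) unfolding hadamard_kernel_def
proof (rule lin_ext_lin_span_zero)
  fix x
  assume "x \<in> {tens g (mono w) | g w. g \<in> var_kernel S n \<and> ml_mon n w}
             \<union> {tens (mono u) h | u h. ml_mon n u \<and> h \<in> var_kernel nov_ids n}"
  then show "fsupp x \<and> lin_ext scale x (pairing scale mul d a) = 0"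
  proof (elim UnE CollectE exE conjE)
    fix g w
    assume "x = tens g (mono w)" "g \<in> var_kernel S n"
    then show ?thesis
      using assms(1,2) by (auto simp: var_kernel_def ml_pol_def fsupp_tens_mono_right
          lin_ext_pairing_tens_var_tideal)
  next
    fix u h
    assume "x = tens (mono u) h" "h \<in> var_kernel nov_ids n"
    then show ?thesis
      by (auto simp: var_kernel_def ml_pol_def ml_mon_def fsupp_tens_mono_left
          lin_ext_pairing_tens_nov_tideal)
  qed
qed

end

theorem mainTheorem12:
  fixes S :: "(mon \<Rightarrow> 'k::field) set"
    and n :: nat
    and f :: "dmon \<Rightarrow> 'k"
    and scale :: "'k \<Rightarrow> 'a::ab_group_add \<Rightarrow> 'a"
    and mul :: "'a \<Rightarrow> 'a \<Rightarrow> 'a"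
    and d :: "'a \<Rightarrow> 'a"
  assumes "\<forall>g\<in>S. multilinear_identity g"
    and "ml_dpol n f"
    and "white_identity S n f"
    and "in_var S scale mul"
    and "is_derivation scale mul d"
  shows "\<forall>a. eval_dpol scale mul d a f = 0"
proof
  fix a
  interpret derivation_algebra scale mul d
    using assms(4,5) by unfold_locales (simp_all add: in_var_def)
  have "\<forall>g\<in>S. fsupp g"
    using assms(1) by (simp add: multilinear_identity_def)
  have "eval_dpol scale mul d a f = lin_ext scale (tens_image f) (pairing scale mul d a)"
    using assms(2) by (intro eval_dpol_eq_lin_ext_tens_image) (simp_all add: ml_dpol_def)
  also have "\<dots> = 0"
    using assms(3,4) \<open>\<forall>g\<in>S. fsupp g\<close> by (simp add: white_identity_def lin_ext_pairing_hadamard_kernel)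
  finally show "eval_dpol scale mul d a f = 0" .
qed

end
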